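(* Let $\gamma>0$, $\mu_1,\mu_2>0$, and let $\tilde G^1_{\gamma,\mu_1}$ and $\tilde G^2_{-\gamma,\mu_2}$ be independent. Then for every $t>0$, $\tilde G^1_{\gamma,\mu_1}(\tilde G^2_{-\gamma,\mu_2}(t))$ has density $$q(x,t)=\gamma\,\frac{x^{\gamma\mu_1-1}t^{\gamma\mu_2}}{(x^\gamma+t^\gamma)^{\mu_1+\mu_2}}\,\frac{\Gamma(\mu_1+\mu_2)}{\Gamma(\mu_1)\Gamma(\mu_2)},\qquad x>0,$$ and $\tilde G^1_{\gamma,\mu_1}(\tilde G^2_{-\gamma,\mu_2}(t))$ has the same distribution as $\tilde G^1_{\gamma,\mu_1}(t^{1/2})\,\tilde G^2_{-\gamma,\mu_2}(t^{1/2})$. Moreover, when $\mu_1=\mu_2=\mu$, $\tilde G^1_{-\gamma,\mu}(\tilde G^2_{\gamma,\mu}(t))$ has the same distribution as $\tilde G^1_{\gamma,\mu}(\tilde G^2_{-\gamma,\mu}(t))$ for every $t>0$.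
   Context: For $\gamma>0,\mu>0$: $\tilde G_{\gamma,\mu}(t)$ is a positive process whose value at time $t$ has density $\gamma (x/t)^{\mu\gamma-1}e^{-(x/t)^{\gamma}}/(t\Gamma(\mu))$, $x>0$; $\tilde G_{-\gamma,\mu}(t)$ is a positive process whose value at time $t$ has density $\gamma (x/t)^{-\mu\gamma-1}e^{-(x/t)^{-\gamma}}/(t\Gamma(\mu))$, $x>0$. Composition of independent processes: if $X$ has marginal densities $f_X(x,s)$ and $Y\ge0$ is independent with marginal densities $f_Y(s,t)$, then $X(Y(t))$ has density $\int_0^\infty f_X(x,s)f_Y(s,t)\,ds$. *)

theory Defs
  imports "HOL-Probability.Probability"
begin

text \<open>Marginal density at time t of the generalized gamma process G~_{gamma,mu}(t).\<close>
definition gg_pos :: "real \<Rightarrow> real \<Rightarrow> real \<Rightarrow> real \<Rightarrow> real" where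
  "gg_pos \<gamma> \<mu> x t = \<gamma> * (x / t) powr (\<mu> * \<gamma> - 1) * exp (- ((x / t) powr \<gamma>)) / (t * Gamma \<mu>)"

text \<open>Marginal density at time t of G~_{-gamma,mu}(t).\<close>
definition gg_neg :: "real \<Rightarrow> real \<Rightarrow> real \<Rightarrow> real \<Rightarrow> real" where
  "gg_neg \<gamma> \<mu> x t = \<gamma> * (x / t) powr (- \<mu> * \<gamma> - 1) * exp (- ((x / t) powr (- \<gamma>))) / (t * Gamma \<mu>)"

definition law_of_density :: "(real \<Rightarrow> real) \<Rightarrow> real measure" where
  "law_of_density f = density lborel (\<lambda>x. indicator {0<..} x * ennreal (f x))"

text \<open>Density of the composition X(Y(t)) of independent processes X and Y (Y >= 0),
  given marginal densities fX(x,s) and fY(s,t).\<close>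
definition comp_density :: "(real \<Rightarrow> real \<Rightarrow> real) \<Rightarrow> (real \<Rightarrow> real \<Rightarrow> real) \<Rightarrow> real \<Rightarrow> real \<Rightarrow> ennreal" where
  "comp_density fX fY x t = (\<integral>\<^sup>+ s. indicator {0<..} s * ennreal (fX x s * fY s t) \<partial>lborel)"

definition comp_law :: "(real \<Rightarrow> real \<Rightarrow> real) \<Rightarrow> (real \<Rightarrow> real \<Rightarrow> real) \<Rightarrow> real \<Rightarrow> real measure" where
  "comp_law fX fY t = density lborel (\<lambda>x. indicator {0<..} x * comp_density fX fY x t)"

definition prod_law :: "real measure \<Rightarrow> real measure \<Rightarrow> real measure" where
  "prod_law M1 M2 = distr (M1 \<Otimes>\<^sub>M M2) lborel (\<lambda>(a, b). a * b)"

end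

theory Submission
  imports Defs
begin

text \<open>
  Writing the marginal densities as products of
  powers and an exponential, the density of \<open>G(\<gamma>,\<mu>1)(G(-\<gamma>,\<mu>2)(t))\<close> at \<open>x\<close> becomes a
  generalized gamma integral \<open>\<integral> s powr (c*\<nu>-1) * exp (-A * s powr c) ds = \<Gamma>(\<nu>) / (\<bar>c\<bar> * A powr \<nu>)\<close>
  over \<open>(0,\<infinity>)\<close>, which evaluates to the generalized beta-prime density \<open>gbp_density\<close>
  (claim 1).  That integral follows from Euler's integral by the substitution \<open>x = b * y powr c\<close>,
  itself obtained from \<open>x = exp v\<close> and an affine change of variables.  The same power
  substitution with \<open>c = -1\<close> gives the other two claims:
  \<^item> the product of independent positive variables has the Mellin convolution of their
    densities as density, and \<open>a = x * sqrt t / s\<close> together with the scale invariance of the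
    marginals turns the Mellin convolution of the time-\<open>sqrt t\<close> marginals into the
    composition integral (claim 2);
  \<^item> the inversion duality \<open>G(-\<gamma>,\<mu>)(t) ~ 1 / G(\<gamma>,\<mu>)(1/t)\<close> with \<open>s = 1/u\<close> shows that the
    reversed composition has the beta-prime density with \<open>\<mu>1, \<mu>2\<close> swapped, which for
    \<open>\<mu>1 = \<mu>2\<close> is claim 3.
  The file develops the substitutions and the gamma integral, then the marginals, then the
  three laws, and derives the theorem last.
\<close>

text \<open>Exhaustions of \<open>(0,\<infinity>)\<close> and of \<open>\<real>\<close> by increasing compact intervals, related by \<open>exp\<close>;
  they let the substitution rule for compact intervals be pushed to the whole half-line.\<close>

lemma exp_intervals_exhaust: "(\<Union>n::nat. {exp (- real n)..exp (real n)}) = {0<..}"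
proof (intro equalityI subsetI)
  fix x :: real assume "x \<in> {0<..}"
  then obtain n :: nat where "\<bar>ln x\<bar> \<le> real n" and "x > 0"
    using real_arch_simple by auto
  then have "exp (- real n) \<le> exp (ln x)" "exp (ln x) \<le> exp (real n)"
    by (subst exp_le_cancel_iff, linarith)+
  with \<open>x > 0\<close> show "x \<in> (\<Union>n. {exp (- real n)..exp (real n)})"
    by auto
qed (auto intro: less_le_trans[OF exp_gt_zero])

lemma symmetric_intervals_exhaust: "(\<Union>n::nat. {- real n..real n}) = UNIV"
proof -
  have "v \<in> (\<Union>n. {- real n..real n})" for v :: real
  proof -
    obtain n :: nat where "\<bar>v\<bar> \<le> real n"
      using real_arch_simple by blast
    then have "v \<in> {- real n..real n}" by (simp add: abs_le_iff)
    then show ?thesis by blast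
  qed
  then show ?thesis by blast
qed

text \<open>Substitution \<open>x = exp v\<close> for non-negative integrals over the whole half-line
  \<open>(0,\<infinity>)\<close>: the library rule on compact intervals, extended by continuity of measure
  along the exhausting intervals.\<close>

lemma nn_integral_exp_substitution:
  fixes f :: "real \<Rightarrow> real"
  assumes [measurable]: "f \<in> borel_measurable borel"
  shows "(\<integral>\<^sup>+x. indicator {0<..} x * ennreal (f x) \<partial>lborel)
       = (\<integral>\<^sup>+v. ennreal (f (exp v) * exp v) \<partial>lborel)"
proof -
  define D where "D = density lborel (\<lambda>x. ennreal (f x))"
  define E where "E = density lborel (\<lambda>v. ennreal (f (exp v) * exp v))"
  define I where "I = (\<lambda>n::nat. {exp (- real n)..exp (real n)})"
  have pieces: "emeasure D (I n) = emeasure E {- real n..real n}" for n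
  proof -
    have "emeasure D (I n) = (\<integral>\<^sup>+x. f x * indicator {exp (- real n)..exp (real n)} x \<partial>lborel)"
      by (auto simp: D_def I_def emeasure_density intro!: nn_integral_cong split: split_indicator)
    also have "\<dots> = (\<integral>\<^sup>+v. f (exp v) * exp v * indicator {- real n..real n} v \<partial>lborel)"
      by (rule nn_integral_substitution)
         (auto simp: set_borel_measurable_def intro!: derivative_eq_intros continuous_intros)
    also have "\<dots> = emeasure E {- real n..real n}"
      by (auto simp: E_def emeasure_density intro!: nn_integral_cong split: split_indicator)
    finally show ?thesis .
  qed
  have "incseq I"
    by (auto simp: I_def incseq_def intro: order_trans[rotated])
  have "(\<integral>\<^sup>+x. indicator {0<..} x * ennreal (f x) \<partial>lborel) = emeasure D (\<Union>n. I n)"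
    by (simp add: D_def I_def exp_intervals_exhaust emeasure_density mult.commute)
  also have "\<dots> = (SUP n. emeasure D (I n))"
    using \<open>incseq I\<close> by (intro SUP_emeasure_incseq[symmetric]) (auto simp: D_def I_def)
  also have "\<dots> = (SUP n. emeasure E {- real n..real n})"
    by (simp add: pieces)
  also have "\<dots> = emeasure E (\<Union>n. {- real n..real n})"
    by (intro SUP_emeasure_incseq) (auto simp: E_def incseq_def)
  also have "(\<Union>n. {- real n..real n}) = UNIV"
    by (rule symmetric_intervals_exhaust)
  finally show ?thesis
    by (simp add: E_def emeasure_density)
qed

text \<open>Power substitution \<open>x = b y\<^sup>c\<close> (\<open>b > 0\<close>, \<open>c \<noteq> 0\<close>, either sign) on \<open>(0,\<infinity>)\<close>,
  reduced to an affine substitution in logarithmic coordinates.\<close>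

lemma nn_integral_power_substitution:
  fixes f :: "real \<Rightarrow> real" and b c :: real
  assumes [measurable]: "f \<in> borel_measurable borel" and b: "b > 0" and c: "c \<noteq> 0"
  shows "(\<integral>\<^sup>+x. indicator {0<..} x * ennreal (f x) \<partial>lborel)
       = ennreal (\<bar>c\<bar> * b) *
         (\<integral>\<^sup>+y. indicator {0<..} y * ennreal (f (b * y powr c) * y powr (c - 1)) \<partial>lborel)"
proof -
  define g where "g y = b * (f (b * y powr c) * y powr (c - 1))" for y
  have g_meas[measurable]: "g \<in> borel_measurable borel"
    unfolding g_def by measurable
  have exp_affine: "f (exp (ln b + c * w)) * exp (ln b + c * w) = g (exp w) * exp w" for w
  proof -
    have "exp (ln b + c * w) = b * exp w powr c"
      using b by (simp add: exp_add powr_def)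
    moreover have "exp w powr c = exp w powr (c - 1) * exp w"
      by (simp add: powr_diff)
    ultimately show ?thesis
      by (simp add: g_def mult_ac)
  qed
  have "(\<integral>\<^sup>+x. indicator {0<..} x * ennreal (f x) \<partial>lborel)
      = (\<integral>\<^sup>+v. ennreal (f (exp v) * exp v) \<partial>lborel)"
    by (rule nn_integral_exp_substitution) measurable
  also have "\<dots> = ennreal \<bar>c\<bar> * (\<integral>\<^sup>+w. ennreal (f (exp (ln b + c * w)) * exp (ln b + c * w)) \<partial>lborel)"
    by (rule nn_integral_real_affine[OF _ c]) measurable
  also have "\<dots> = ennreal \<bar>c\<bar> * (\<integral>\<^sup>+y. indicator {0<..} y * ennreal (g y) \<partial>lborel)"
    by (simp only: exp_affine nn_integral_exp_substitution[OF g_meas])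
  also have "(\<integral>\<^sup>+y. indicator {0<..} y * ennreal (g y) \<partial>lborel)
      = ennreal b * (\<integral>\<^sup>+y. indicator {0<..} y * ennreal (f (b * y powr c) * y powr (c - 1)) \<partial>lborel)"
    using b by (subst nn_integral_cmult[symmetric])
      (auto simp: g_def ennreal_mult' mult_ac intro!: nn_integral_cong)
  finally show ?thesis
    using b by (simp add: ennreal_mult mult.assoc)
qed

lemma nn_integral_gamma_power:
  fixes A \<nu> c :: real
  assumes A: "A > 0" and \<nu>: "\<nu> > 0" and c: "c \<noteq> 0"
  shows "(\<integral>\<^sup>+s. indicator {0<..} s * ennreal (s powr (c * \<nu> - 1) * exp (- (A * s powr c))) \<partial>lborel)
       = ennreal (Gamma \<nu> / (\<bar>c\<bar> * A powr \<nu>))"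
    (is "?I = _")
proof -
  define k where "k = \<bar>c\<bar> * A powr \<nu>"
  have k: "k > 0"
    using A c by (simp add: k_def)
  have integrand: "(A * y powr c) powr (\<nu> - 1) * exp (- (A * y powr c)) * y powr (c - 1)
      = A powr (\<nu> - 1) * (y powr (c * \<nu> - 1) * exp (- (A * y powr c)))" if "y > 0" for y
  proof -
    have "(y powr c) powr (\<nu> - 1) * y powr (c - 1) = y powr (c * \<nu> - 1)"
      using that by (simp add: powr_powr powr_add[symmetric] algebra_simps)
    then show ?thesis
      using A that by (simp add: powr_mult mult_ac)
  qed
  have "ennreal (Gamma \<nu>)
      = (\<integral>\<^sup>+u. indicator {0<..} u * ennreal (u powr (\<nu> - 1) * exp (- u)) \<partial>lborel)"
    unfolding Gamma_conv_nn_integral_real[OF \<nu>]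
    by (intro nn_integral_cong) (auto simp: indicator_def exp_minus field_simps)
  also have "\<dots> = ennreal (\<bar>c\<bar> * A) * (\<integral>\<^sup>+y. indicator {0<..} y *
        ennreal ((A * y powr c) powr (\<nu> - 1) * exp (- (A * y powr c)) * y powr (c - 1)) \<partial>lborel)"
    by (rule nn_integral_power_substitution[OF _ A c]) measurable
  also have "(\<integral>\<^sup>+y. indicator {0<..} y *
        ennreal ((A * y powr c) powr (\<nu> - 1) * exp (- (A * y powr c)) * y powr (c - 1)) \<partial>lborel)
      = ennreal (A powr (\<nu> - 1)) * ?I"
  proof (subst nn_integral_cmult[symmetric], measurable, intro nn_integral_cong)
    fix y :: real
    show "indicator {0<..} y * ennreal ((A * y powr c) powr (\<nu> - 1) * exp (- (A * y powr c)) * y powr (c - 1))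
        = ennreal (A powr (\<nu> - 1)) * (indicator {0<..} y * ennreal (y powr (c * \<nu> - 1) * exp (- (A * y powr c))))"
      by (cases "y > 0") (simp_all add: integrand ennreal_mult')
  qed
  also have "ennreal (\<bar>c\<bar> * A) * (ennreal (A powr (\<nu> - 1)) * ?I) = ennreal k * ?I"
    using A by (simp add: k_def ennreal_mult'[symmetric] mult.assoc[symmetric] powr_diff)
  finally have Gamma_eq: "ennreal (Gamma \<nu>) = ennreal k * ?I" .
  have "ennreal (1 / k) * ennreal k = 1"
    using k by (simp add: ennreal_mult'[symmetric])
  then have "?I = ennreal (1 / k) * (ennreal k * ?I)"
    by (simp add: mult.assoc[symmetric])
  also have "\<dots> = ennreal (Gamma \<nu> / k)"
    using k by (simp add: Gamma_eq[symmetric] ennreal_mult'[symmetric])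
  finally show ?thesis
    by (simp add: k_def)
qed

definition gbp_density :: "real \<Rightarrow> real \<Rightarrow> real \<Rightarrow> real \<Rightarrow> real \<Rightarrow> real" where
  "gbp_density \<gamma> \<mu>1 \<mu>2 t x = \<gamma> * (x powr (\<gamma> * \<mu>1 - 1) * t powr (\<gamma> * \<mu>2))
     / (x powr \<gamma> + t powr \<gamma>) powr (\<mu>1 + \<mu>2) * Gamma (\<mu>1 + \<mu>2) / (Gamma \<mu>1 * Gamma \<mu>2)"

lemma gbp_density_inversion:
  assumes "x > 0" and "t > 0"
  shows "gbp_density \<gamma> \<mu>1 \<mu>2 (1 / t) (1 / x) / x\<^sup>2 = gbp_density \<gamma> \<mu>2 \<mu>1 t x"
proof -
  have sum: "(1 / x) powr \<gamma> + (1 / t) powr \<gamma> = (x powr \<gamma> + t powr \<gamma>) * (x powr (- \<gamma>) * t powr (- \<gamma>))"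
    using assms by (simp add: powr_divide powr_minus_divide field_simps)
  have "(x powr \<gamma> + t powr \<gamma>) > 0"
    using assms by (simp add: add_pos_pos)
  then show ?thesis
    using assms unfolding gbp_density_def sum
    by (simp add: powr_mult powr_powr powr_divide powr_minus_divide powr_add[symmetric]
        powr_diff field_simps power2_eq_square)
       (simp add: powr_add)
qed

lemma measurable_gg_pos [measurable]:
  assumes [measurable]: "f \<in> borel_measurable M" "g \<in> borel_measurable M"
  shows "(\<lambda>x. gg_pos \<gamma> \<mu> (f x) (g x)) \<in> borel_measurable M"
  unfolding gg_pos_def by measurable

lemma measurable_gg_neg [measurable]:
  assumes [measurable]: "f \<in> borel_measurable M" "g \<in> borel_measurable M"
  shows "(\<lambda>x. gg_neg \<gamma> \<mu> (f x) (g x)) \<in> borel_measurable M"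
  unfolding gg_neg_def by measurable

lemma gg_pos_nonneg: "\<gamma> > 0 \<Longrightarrow> \<mu> > 0 \<Longrightarrow> t > 0 \<Longrightarrow> gg_pos \<gamma> \<mu> x t \<ge> 0"
  by (simp add: gg_pos_def Gamma_real_pos)

lemma gg_neg_nonneg: "\<gamma> > 0 \<Longrightarrow> \<mu> > 0 \<Longrightarrow> t > 0 \<Longrightarrow> gg_neg \<gamma> \<mu> x t \<ge> 0"
  by (simp add: gg_neg_def Gamma_real_pos)

lemma gg_pos_scale: "c > 0 \<Longrightarrow> gg_pos \<gamma> \<mu> (c * x) (c * t) = gg_pos \<gamma> \<mu> x t / c"
  by (simp add: gg_pos_def)

lemma gg_neg_scale: "c > 0 \<Longrightarrow> gg_neg \<gamma> \<mu> (c * x) (c * t) = gg_neg \<gamma> \<mu> x t / c"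
  by (simp add: gg_neg_def)

lemma gg_neg_inversion:
  assumes "x > 0" and "t > 0"
  shows "gg_neg \<gamma> \<mu> x t = gg_pos \<gamma> \<mu> (1 / x) (1 / t) / x\<^sup>2"
proof -
  have base: "1 / x / (1 / t) = t / x"
    by simp
  have power: "(x / t) powr (- \<mu> * \<gamma> - 1) = (t / x) powr (\<mu> * \<gamma> - 1) * (t / x)\<^sup>2"
    using assms by (simp add: powr_minus_divide[symmetric] powr_add[symmetric] powr_divide
        powr_minus_divide power2_eq_square powr_diff field_simps)
  have exponent: "(x / t) powr (- \<gamma>) = (t / x) powr \<gamma>"
    using assms by (simp add: powr_minus_divide powr_divide)
  show ?thesis
    unfolding gg_pos_def gg_neg_def base power exponent
    using assms by (simp add: field_simps power2_eq_square)
qed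

lemma gg_pos_power_form:
  assumes "x > 0" and "s > 0"
  shows "gg_pos \<gamma> \<mu> x s
       = \<gamma> / Gamma \<mu> * x powr (\<mu> * \<gamma> - 1) * s powr (- \<mu> * \<gamma>) * exp (- (x powr \<gamma> * s powr (- \<gamma>)))"
  using assms by (simp add: gg_pos_def powr_divide powr_minus_divide powr_diff field_simps)

lemma gg_neg_power_form:
  assumes "s > 0" and "t > 0"
  shows "gg_neg \<gamma> \<mu> s t
       = \<gamma> / Gamma \<mu> * t powr (\<mu> * \<gamma>) * s powr (- \<mu> * \<gamma> - 1) * exp (- (t powr \<gamma> * s powr (- \<gamma>)))"
  using assms by (simp add: gg_neg_def powr_divide powr_minus_divide powr_diff powr_add field_simps)

text \<open>Claim 1 pointwise: the composition integral is a generalized gamma integral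
  in the inner time \<open>s\<close> with exponent \<open>c = -\<gamma>\<close>.\<close>

lemma comp_density_pos_neg:
  fixes \<gamma> \<mu>1 \<mu>2 x t :: real
  assumes \<gamma>: "\<gamma> > 0" and \<mu>: "\<mu>1 > 0" "\<mu>2 > 0" and x: "x > 0" and t: "t > 0"
  shows "comp_density (\<lambda>x s. gg_pos \<gamma> \<mu>1 x s) (\<lambda>s t. gg_neg \<gamma> \<mu>2 s t) x t
       = ennreal (gbp_density \<gamma> \<mu>1 \<mu>2 t x)"
proof -
  define K where "K = \<gamma>\<^sup>2 / (Gamma \<mu>1 * Gamma \<mu>2) * x powr (\<mu>1 * \<gamma> - 1) * t powr (\<mu>2 * \<gamma>)"
  define A where "A = x powr \<gamma> + t powr \<gamma>"
  have A: "A > 0" and K: "K \<ge> 0"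
    using x t \<mu> by (simp_all add: A_def K_def add_pos_pos Gamma_real_pos)
  have integrand: "gg_pos \<gamma> \<mu>1 x s * gg_neg \<gamma> \<mu>2 s t
      = K * (s powr (- \<gamma> * (\<mu>1 + \<mu>2) - 1) * exp (- (A * s powr (- \<gamma>))))" if s: "s > 0" for s
  proof -
    have "s powr (- \<mu>1 * \<gamma>) * s powr (- \<mu>2 * \<gamma> - 1) = s powr (- \<gamma> * (\<mu>1 + \<mu>2) - 1)"
      using s by (simp add: powr_add[symmetric] algebra_simps)
    moreover have "exp (- (x powr \<gamma> * s powr (- \<gamma>))) * exp (- (t powr \<gamma> * s powr (- \<gamma>)))
        = exp (- (A * s powr (- \<gamma>)))"
      by (simp add: A_def exp_add[symmetric] algebra_simps)
    ultimately show ?thesis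
      unfolding gg_pos_power_form[OF x s] gg_neg_power_form[OF s t] K_def
      by (simp add: power2_eq_square field_simps)
  qed
  have "comp_density (\<lambda>x s. gg_pos \<gamma> \<mu>1 x s) (\<lambda>s t. gg_neg \<gamma> \<mu>2 s t) x t
      = (\<integral>\<^sup>+s. ennreal K * (indicator {0<..} s *
           ennreal (s powr (- \<gamma> * (\<mu>1 + \<mu>2) - 1) * exp (- (A * s powr (- \<gamma>))))) \<partial>lborel)"
    unfolding comp_density_def
    by (intro nn_integral_cong) (auto simp: indicator_def integrand ennreal_mult' K)
  also have "\<dots> = ennreal K * ennreal (Gamma (\<mu>1 + \<mu>2) / (\<bar>- \<gamma>\<bar> * A powr (\<mu>1 + \<mu>2)))"
    by (subst nn_integral_cmult, measurable, subst nn_integral_gamma_power[OF A])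
       (use \<gamma> \<mu> in auto)
  also have "\<dots> = ennreal (K * (Gamma (\<mu>1 + \<mu>2) / (\<bar>- \<gamma>\<bar> * A powr (\<mu>1 + \<mu>2))))"
    by (rule ennreal_mult'[OF K, symmetric])
  also have "K * (Gamma (\<mu>1 + \<mu>2) / (\<bar>- \<gamma>\<bar> * A powr (\<mu>1 + \<mu>2))) = gbp_density \<gamma> \<mu>1 \<mu>2 t x"
    using \<gamma> by (simp add: gbp_density_def K_def A_def power2_eq_square field_simps)
  finally show ?thesis .
qed

text \<open>Reversed composition: by inversion and \<open>s = 1/u\<close> it is the forward composition
  at \<open>(1/x, 1/t)\<close>, hence beta-prime with swapped shape parameters.\<close>

lemma comp_density_neg_pos:
  fixes \<gamma> \<mu>1 \<mu>2 x t :: real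
  assumes \<gamma>: "\<gamma> > 0" and \<mu>: "\<mu>1 > 0" "\<mu>2 > 0" and x: "x > 0" and t: "t > 0"
  shows "comp_density (\<lambda>x s. gg_neg \<gamma> \<mu>1 x s) (\<lambda>s t. gg_pos \<gamma> \<mu>2 s t) x t
       = ennreal (gbp_density \<gamma> \<mu>2 \<mu>1 t x)"
proof -
  have inverted: "gg_neg \<gamma> \<mu>1 x (1 / u) * gg_pos \<gamma> \<mu>2 (1 / u) t * u powr - 2
      = 1 / x\<^sup>2 * (gg_pos \<gamma> \<mu>1 (1 / x) u * gg_neg \<gamma> \<mu>2 u (1 / t))" if u: "u > 0" for u
  proof -
    have "gg_neg \<gamma> \<mu>1 x (1 / u) = gg_pos \<gamma> \<mu>1 (1 / x) u / x\<^sup>2"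
      using gg_neg_inversion[OF x, of "1 / u"] u by simp
    moreover have "gg_pos \<gamma> \<mu>2 (1 / u) t = gg_neg \<gamma> \<mu>2 u (1 / t) * u\<^sup>2"
      using gg_neg_inversion[OF u, of "1 / t"] u t by simp
    ultimately show ?thesis
      using u by (simp add: powr_minus_divide powr_diff power2_eq_square field_simps)
  qed
  have "comp_density (\<lambda>x s. gg_neg \<gamma> \<mu>1 x s) (\<lambda>s t. gg_pos \<gamma> \<mu>2 s t) x t
      = ennreal (\<bar>- 1\<bar> * 1) * (\<integral>\<^sup>+u. indicator {0<..} u *
          ennreal (gg_neg \<gamma> \<mu>1 x (1 * u powr - 1) * gg_pos \<gamma> \<mu>2 (1 * u powr - 1) t * u powr (- 1 - 1)) \<partial>lborel)"
    unfolding comp_density_def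
    by (rule nn_integral_power_substitution) auto
  also have "\<dots> = (\<integral>\<^sup>+u. ennreal (1 / x\<^sup>2) *
      (indicator {0<..} u * ennreal (gg_pos \<gamma> \<mu>1 (1 / x) u * gg_neg \<gamma> \<mu>2 u (1 / t))) \<partial>lborel)"
    unfolding abs_minus_cancel abs_one mult_1 ennreal_1 mult_1_left
    by (intro nn_integral_cong) (auto simp: indicator_def inverted ennreal_mult'[symmetric])
  also have "\<dots> = ennreal (1 / x\<^sup>2) * ennreal (gbp_density \<gamma> \<mu>1 \<mu>2 (1 / t) (1 / x))"
    using comp_density_pos_neg[OF \<gamma> \<mu>, of "1 / x" "1 / t"] x t
    by (subst nn_integral_cmult) (auto simp: comp_density_def)
  also have "\<dots> = ennreal (gbp_density \<gamma> \<mu>2 \<mu>1 t x)"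
    using gbp_density_inversion[OF x t, of \<gamma> \<mu>1 \<mu>2] by (simp add: ennreal_mult'[symmetric])
  finally show ?thesis .
qed

definition mellin_conv :: "(real \<Rightarrow> real) \<Rightarrow> (real \<Rightarrow> real) \<Rightarrow> real \<Rightarrow> ennreal" where
  "mellin_conv f g y = (\<integral>\<^sup>+a. indicator {0<..} a * ennreal (f a * g (y / a) / a) \<partial>lborel)"

lemma measurable_mellin_conv [measurable]:
  assumes [measurable]: "f \<in> borel_measurable borel" "g \<in> borel_measurable borel"
  shows "mellin_conv f g \<in> borel_measurable borel"
  unfolding mellin_conv_def by measurable

text \<open>Claim 2 pointwise: substituting \<open>a = y\<surd>t/s\<close> and using scale invariance, the
  Mellin convolution of the time-\<open>\<surd>t\<close> marginals is the composition integral.\<close>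

lemma mellin_conv_gg_eq_comp_density:
  fixes \<gamma> \<mu>1 \<mu>2 y t :: real
  assumes y: "y > 0" and t: "t > 0"
  shows "mellin_conv (\<lambda>a. gg_pos \<gamma> \<mu>1 a (sqrt t)) (\<lambda>b. gg_neg \<gamma> \<mu>2 b (sqrt t)) y
       = comp_density (\<lambda>x s. gg_pos \<gamma> \<mu>1 x s) (\<lambda>s t. gg_neg \<gamma> \<mu>2 s t) y t"
proof -
  define r where "r = sqrt t"
  have r: "r > 0" and t_eq: "t = r * r"
    using t by (simp_all add: r_def)
  have yr: "y * r > 0"
    using y r by simp
  have substituted: "y * r * (gg_pos \<gamma> \<mu>1 (y * r * s powr - 1) r * gg_neg \<gamma> \<mu>2 (y / (y * r * s powr - 1)) r
        / (y * r * s powr - 1) * s powr (- 1 - 1))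
      = gg_pos \<gamma> \<mu>1 y s * gg_neg \<gamma> \<mu>2 s t" if s: "s > 0" for s
  proof -
    have "gg_pos \<gamma> \<mu>1 (y * r * s powr - 1) r = gg_pos \<gamma> \<mu>1 y s * (s / r)"
      using gg_pos_scale[of "r / s" \<gamma> \<mu>1 y s] r s by (simp add: powr_minus_divide mult.commute)
    moreover have "gg_neg \<gamma> \<mu>2 (y / (y * r * s powr - 1)) r = gg_neg \<gamma> \<mu>2 s t * r"
      using gg_neg_scale[of "1 / r" \<gamma> \<mu>2 s t] r s y unfolding t_eq by (simp add: powr_minus_divide)
    ultimately show ?thesis
      using r s y by (simp add: powr_minus_divide powr_diff field_simps power2_eq_square)
  qed
  have "mellin_conv (\<lambda>a. gg_pos \<gamma> \<mu>1 a r) (\<lambda>b. gg_neg \<gamma> \<mu>2 b r) y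
      = ennreal (\<bar>- 1\<bar> * (y * r)) * (\<integral>\<^sup>+s. indicator {0<..} s *
          ennreal (gg_pos \<gamma> \<mu>1 (y * r * s powr - 1) r * gg_neg \<gamma> \<mu>2 (y / (y * r * s powr - 1)) r
            / (y * r * s powr - 1) * s powr (- 1 - 1)) \<partial>lborel)"
    unfolding mellin_conv_def
    by (rule nn_integral_power_substitution[OF _ yr]) measurable
  also have "\<dots> = comp_density (\<lambda>x s. gg_pos \<gamma> \<mu>1 x s) (\<lambda>s t. gg_neg \<gamma> \<mu>2 s t) y t"
    unfolding comp_density_def abs_minus_cancel abs_one mult_1
  proof (subst nn_integral_cmult[symmetric], measurable, intro nn_integral_cong)
    fix s :: real
    show "ennreal (y * r) * (indicator {0<..} s *
          ennreal (gg_pos \<gamma> \<mu>1 (y * r * s powr - 1) r * gg_neg \<gamma> \<mu>2 (y / (y * r * s powr - 1)) r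
            / (y * r * s powr - 1) * s powr (- 1 - 1)))
        = indicator {0<..} s * ennreal (gg_pos \<gamma> \<mu>1 y s * gg_neg \<gamma> \<mu>2 s t)"
    proof (cases "s > 0")
      case True
      then show ?thesis
        using yr by (simp only: ennreal_mult'[symmetric] substituted indicator_simps mult_1
            mem_Collect_eq greaterThan_iff if_True less_imp_le)
    qed simp
  qed
  finally show ?thesis
    by (simp add: r_def)
qed

text \<open>One slice of the product integral: for fixed \<open>a > 0\<close> the substitution \<open>b = y/a\<close>
  turns the inner integral over \<open>b\<close> into an integral over the product \<open>y = a b\<close>.\<close>

lemma nn_integral_product_slice:
  fixes f g :: "real \<Rightarrow> real" and a :: real
  assumes [measurable]: "g \<in> borel_measurable borel" "A \<in> sets borel"
    and a: "a > 0" and f_nonneg: "f a \<ge> 0" and g_nonneg: "\<And>x. x > 0 \<Longrightarrow> g x \<ge> 0"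
  shows "ennreal (f a) * (\<integral>\<^sup>+b. indicator {0<..} b * ennreal (g b) * indicator A (a * b) \<partial>lborel)
       = (\<integral>\<^sup>+y. indicator A y * (indicator {0<..} y * ennreal (f a * g (y / a) / a)) \<partial>lborel)"
proof -
  have quotient_pos: "y / a > 0 \<longleftrightarrow> y > 0" for y
    using a by (simp add: zero_less_divide_iff)
  have "(\<integral>\<^sup>+b. indicator {0<..} b * ennreal (g b) * indicator A (a * b) \<partial>lborel)
      = ennreal \<bar>1 / a\<bar> * (\<integral>\<^sup>+y. indicator {0<..} (0 + 1 / a * y) * ennreal (g (0 + 1 / a * y))
          * indicator A (a * (0 + 1 / a * y)) \<partial>lborel)"
    by (rule nn_integral_real_affine) (use a in auto)
  also have "\<dots> = (\<integral>\<^sup>+y. ennreal (1 / a) * (indicator {0<..} (y / a) * ennreal (g (y / a)) * indicator A y) \<partial>lborel)"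
    using a by (subst nn_integral_cmult) auto
  finally have "ennreal (f a) * (\<integral>\<^sup>+b. indicator {0<..} b * ennreal (g b) * indicator A (a * b) \<partial>lborel)
      = (\<integral>\<^sup>+y. ennreal (f a) * (ennreal (1 / a) * (indicator {0<..} (y / a) * ennreal (g (y / a)) * indicator A y)) \<partial>lborel)"
    by (simp add: nn_integral_cmult)
  also have "\<dots> = (\<integral>\<^sup>+y. indicator A y * (indicator {0<..} y * ennreal (f a * g (y / a) / a)) \<partial>lborel)"
    using a f_nonneg g_nonneg
    by (intro nn_integral_cong)
       (auto simp: indicator_def ennreal_mult'[symmetric] mult_ac quotient_pos)
  finally show ?thesis .
qed

lemma prod_law_eq_mellin_conv:
  fixes f g :: "real \<Rightarrow> real"
  assumes [measurable]: "f \<in> borel_measurable borel" "g \<in> borel_measurable borel"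
    and f_nonneg: "\<And>x. x > 0 \<Longrightarrow> f x \<ge> 0" and g_nonneg: "\<And>x. x > 0 \<Longrightarrow> g x \<ge> 0"
  shows "prod_law (law_of_density f) (law_of_density g)
       = density lborel (\<lambda>y. indicator {0<..} y * mellin_conv f g y)"
proof (rule measure_eqI)
  define df where "df a = indicator {0<..} a * ennreal (f a)" for a
  define dg where "dg b = indicator {0<..} b * ennreal (g b)" for b
  have [measurable]: "df \<in> borel_measurable borel" "dg \<in> borel_measurable borel"
    unfolding df_def dg_def by measurable
  interpret G: sigma_finite_measure "density lborel dg"
    by (subst sigma_finite_measure.sigma_finite_iff_density_finite[OF sigma_finite_lborel])
       (auto simp: dg_def indicator_def)
  define H where "H A a y = indicator A y * (indicator {0<..} y *
      (indicator {0<..} a * ennreal (f a * g (y / a) / a)))" for A a y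
  fix A assume "A \<in> sets (prod_law (law_of_density f) (law_of_density g))"
  then have [measurable]: "A \<in> sets borel"
    by (simp add: prod_law_def)
  have inner: "df a * (\<integral>\<^sup>+b. dg b * indicator A (a * b) \<partial>lborel) = (\<integral>\<^sup>+y. H A a y \<partial>lborel)" for a
    using nn_integral_product_slice[of g A a f] f_nonneg g_nonneg
    by (cases "a > 0") (simp_all add: df_def dg_def H_def mult_ac)
  have "emeasure (prod_law (law_of_density f) (law_of_density g)) A
      = (\<integral>\<^sup>+x. indicator A x \<partial>prod_law (law_of_density f) (law_of_density g))"
    by (simp add: prod_law_def)
  also have "\<dots> = (\<integral>\<^sup>+p. indicator A (fst p * snd p) \<partial>(density lborel df \<Otimes>\<^sub>M density lborel dg))"
    unfolding prod_law_def law_of_density_def df_def[abs_def] dg_def[abs_def]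
    by (subst nn_integral_distr) (auto simp: case_prod_beta)
  also have "\<dots> = (\<integral>\<^sup>+a. \<integral>\<^sup>+b. indicator A (a * b) \<partial>density lborel dg \<partial>density lborel df)"
    by (subst G.nn_integral_fst[symmetric]) auto
  also have "\<dots> = (\<integral>\<^sup>+a. df a * \<integral>\<^sup>+b. dg b * indicator A (a * b) \<partial>lborel \<partial>lborel)"
    by (simp add: nn_integral_density)
  also have "\<dots> = (\<integral>\<^sup>+a. \<integral>\<^sup>+y. H A a y \<partial>lborel \<partial>lborel)"
    by (simp add: inner)
  also have "\<dots> = (\<integral>\<^sup>+y. \<integral>\<^sup>+a. H A a y \<partial>lborel \<partial>lborel)"
    by (rule lborel_pair.Fubini') (unfold H_def, measurable)
  also have "\<dots> = (\<integral>\<^sup>+y. indicator {0<..} y * mellin_conv f g y * indicator A y \<partial>lborel)"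
  proof (intro nn_integral_cong)
    fix y :: real
    show "(\<integral>\<^sup>+a. H A a y \<partial>lborel) = indicator {0<..} y * mellin_conv f g y * indicator A y"
      unfolding H_def mellin_conv_def
      by (subst nn_integral_cmult, measurable)+ (simp add: mult_ac)
  qed
  also have "\<dots> = emeasure (density lborel (\<lambda>y. indicator {0<..} y * mellin_conv f g y)) A"
    by (simp add: emeasure_density)
  finally show "emeasure (prod_law (law_of_density f) (law_of_density g)) A
      = emeasure (density lborel (\<lambda>y. indicator {0<..} y * mellin_conv f g y)) A" .
qed (simp add: prod_law_def)

lemma density_on_positive_eq_law_of_density:
  assumes "\<And>x. x > 0 \<Longrightarrow> h x = ennreal (q x)"
  shows "density lborel (\<lambda>x. indicator {0<..} x * h x) = law_of_density q"
  unfolding law_of_density_def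
  by (rule arg_cong[where f="density lborel"]) (auto simp: assms indicator_def)

lemma comp_law_pos_neg:
  assumes "\<gamma> > 0" "\<mu>1 > 0" "\<mu>2 > 0" "t > 0"
  shows "comp_law (\<lambda>x s. gg_pos \<gamma> \<mu>1 x s) (\<lambda>s t. gg_neg \<gamma> \<mu>2 s t) t
       = law_of_density (gbp_density \<gamma> \<mu>1 \<mu>2 t)"
  unfolding comp_law_def
  using assms by (intro density_on_positive_eq_law_of_density comp_density_pos_neg)

lemma comp_law_neg_pos:
  assumes "\<gamma> > 0" "\<mu>1 > 0" "\<mu>2 > 0" "t > 0"
  shows "comp_law (\<lambda>x s. gg_neg \<gamma> \<mu>1 x s) (\<lambda>s t. gg_pos \<gamma> \<mu>2 s t) t
       = law_of_density (gbp_density \<gamma> \<mu>2 \<mu>1 t)"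
  unfolding comp_law_def
  using assms by (intro density_on_positive_eq_law_of_density comp_density_neg_pos)

lemma prod_law_gg_sqrt:
  assumes "\<gamma> > 0" "\<mu>1 > 0" "\<mu>2 > 0" "t > 0"
  shows "prod_law (law_of_density (\<lambda>x. gg_pos \<gamma> \<mu>1 x (sqrt t)))
                  (law_of_density (\<lambda>x. gg_neg \<gamma> \<mu>2 x (sqrt t)))
       = law_of_density (gbp_density \<gamma> \<mu>1 \<mu>2 t)"
  using assms
  by (subst prod_law_eq_mellin_conv)
     (auto intro!: density_on_positive_eq_law_of_density gg_pos_nonneg gg_neg_nonneg
       simp: mellin_conv_gg_eq_comp_density comp_density_pos_neg)

theorem mainTheorem4:
  fixes \<gamma> \<mu>1 \<mu>2 :: real
  assumes "\<gamma> > 0" and "\<mu>1 > 0" and "\<mu>2 > 0"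
  shows "(\<forall>t>0. comp_law (\<lambda>x s. gg_pos \<gamma> \<mu>1 x s) (\<lambda>s t. gg_neg \<gamma> \<mu>2 s t) t
              = law_of_density (\<lambda>x. \<gamma> * (x powr (\<gamma> * \<mu>1 - 1) * t powr (\<gamma> * \<mu>2))
                     / (x powr \<gamma> + t powr \<gamma>) powr (\<mu>1 + \<mu>2)
                     * Gamma (\<mu>1 + \<mu>2) / (Gamma \<mu>1 * Gamma \<mu>2)))
       \<and> (\<forall>t>0. comp_law (\<lambda>x s. gg_pos \<gamma> \<mu>1 x s) (\<lambda>s t. gg_neg \<gamma> \<mu>2 s t) t
              = prod_law (law_of_density (\<lambda>x. gg_pos \<gamma> \<mu>1 x (sqrt t)))
                         (law_of_density (\<lambda>x. gg_neg \<gamma> \<mu>2 x (sqrt t))))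
       \<and> (\<forall>\<mu>>0. \<forall>t>0. comp_law (\<lambda>x s. gg_neg \<gamma> \<mu> x s) (\<lambda>s t. gg_pos \<gamma> \<mu> s t) t
              = comp_law (\<lambda>x s. gg_pos \<gamma> \<mu> x s) (\<lambda>s t. gg_neg \<gamma> \<mu> s t) t)"
proof (intro conjI allI impI)
  fix t :: real assume "t > 0"
  with assms show "comp_law (\<lambda>x s. gg_pos \<gamma> \<mu>1 x s) (\<lambda>s t. gg_neg \<gamma> \<mu>2 s t) t
      = law_of_density (\<lambda>x. \<gamma> * (x powr (\<gamma> * \<mu>1 - 1) * t powr (\<gamma> * \<mu>2))
          / (x powr \<gamma> + t powr \<gamma>) powr (\<mu>1 + \<mu>2) * Gamma (\<mu>1 + \<mu>2) / (Gamma \<mu>1 * Gamma \<mu>2))"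
    by (simp add: comp_law_pos_neg gbp_density_def[abs_def])
  from \<open>t > 0\<close> assms show "comp_law (\<lambda>x s. gg_pos \<gamma> \<mu>1 x s) (\<lambda>s t. gg_neg \<gamma> \<mu>2 s t) t
      = prod_law (law_of_density (\<lambda>x. gg_pos \<gamma> \<mu>1 x (sqrt t)))
                 (law_of_density (\<lambda>x. gg_neg \<gamma> \<mu>2 x (sqrt t)))"
    by (simp add: comp_law_pos_neg prod_law_gg_sqrt)
next
  fix \<mu> t :: real assume "\<mu> > 0" and "t > 0"
  with assms show "comp_law (\<lambda>x s. gg_neg \<gamma> \<mu> x s) (\<lambda>s t. gg_pos \<gamma> \<mu> s t) t
      = comp_law (\<lambda>x s. gg_pos \<gamma> \<mu> x s) (\<lambda>s t. gg_neg \<gamma> \<mu> s t) t"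
    by (simp add: comp_law_pos_neg comp_law_neg_pos)
qed

end
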